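(* Let $(W,S)$ be a chordal Coxeter system, let $A=\{a,b,c\}$ be a maximal irreducible simplex of $(W,S)$, and let $d\in S-(A\cup A^\perp)$ be such that $\{a,b,d\}$ is a simplex. Then $\{a,b\}\cup A^\perp$ is a $(c,d)$-separator of $S$.
   Context: Coxeter system $(W,S)$: $W=\langle S\mid (st)^{m(s,t)}\ (m(s,t)<\infty)\rangle$, $m(s,s)=1$, $m(s,t)=m(t,s)\in\{2,\dots,\infty\}$. $\Gamma(W,S)$: graph on $S$ with edge $\{s,t\}$ iff $s\ne t$, $m(s,t)<\infty$; chordal: every cycle of length $\ge4$ has a chord. A simplex is $A\subseteq S$ with all $m(s,t)<\infty$; $A$ is irreducible if the graph on $A$ with edges $m(s,t)\ge3$ is connected; a maximal irreducible simplex is an irreducible simplex not properly contained in another irreducible simplex. $A^\perp=\{s\in S: m(s,x)=2\ \forall x\in A\}$. For $c,d\in S$, $B\subseteq S$ is a $(c,d)$-separator of $S$ if $c,d\notin B$ and $c$ and $d$ lie in different connected components of $\Gamma(W,S)-B$. *)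

theory Defs
  imports Main "HOL-Library.Extended_Nat"
begin

text \<open>A Coxeter system (W,S) is determined by its Coxeter matrix m on S,
  with values in {1,2,...} \<union> {\<infinity>}; all notions used below depend only on (S,m).\<close>

definition coxeter_matrix :: "'a set \<Rightarrow> ('a \<Rightarrow> 'a \<Rightarrow> enat) \<Rightarrow> bool" where
  "coxeter_matrix S m \<longleftrightarrow>
     (\<forall>s\<in>S. m s s = 1) \<and>
     (\<forall>s\<in>S. \<forall>t\<in>S. m s t = m t s) \<and>
     (\<forall>s\<in>S. \<forall>t\<in>S. s \<noteq> t \<longrightarrow> m s t \<ge> 2)"

definition cox_edge :: "'a set \<Rightarrow> ('a \<Rightarrow> 'a \<Rightarrow> enat) \<Rightarrow> 'a \<Rightarrow> 'a \<Rightarrow> bool" where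
  "cox_edge S m s t \<longleftrightarrow> s \<in> S \<and> t \<in> S \<and> s \<noteq> t \<and> m s t < \<infinity>"

definition chordal :: "'a set \<Rightarrow> ('a \<Rightarrow> 'a \<Rightarrow> enat) \<Rightarrow> bool" where
  "chordal S m \<longleftrightarrow>
     (\<forall>vs. distinct vs \<and> length vs \<ge> 4 \<and> set vs \<subseteq> S \<and>
        (\<forall>i < length vs. cox_edge S m (vs ! i) (vs ! ((i + 1) mod length vs)))
      \<longrightarrow> (\<exists>i < length vs. \<exists>j < length vs. i \<noteq> j \<and>
             j \<noteq> (i + 1) mod length vs \<and> i \<noteq> (j + 1) mod length vs \<and>
             cox_edge S m (vs ! i) (vs ! j)))"

definition simplex :: "'a set \<Rightarrow> ('a \<Rightarrow> 'a \<Rightarrow> enat) \<Rightarrow> 'a set \<Rightarrow> bool" where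
  "simplex S m A \<longleftrightarrow> A \<subseteq> S \<and> (\<forall>s\<in>A. \<forall>t\<in>A. m s t < \<infinity>)"

definition irreducible_simplex :: "'a set \<Rightarrow> ('a \<Rightarrow> 'a \<Rightarrow> enat) \<Rightarrow> 'a set \<Rightarrow> bool" where
  "irreducible_simplex S m A \<longleftrightarrow> simplex S m A \<and> A \<noteq> {} \<and>
     (\<forall>x\<in>A. \<forall>y\<in>A. (\<lambda>u v. u \<in> A \<and> v \<in> A \<and> u \<noteq> v \<and> m u v \<ge> 3)\<^sup>*\<^sup>* x y)"

definition maximal_irreducible_simplex :: "'a set \<Rightarrow> ('a \<Rightarrow> 'a \<Rightarrow> enat) \<Rightarrow> 'a set \<Rightarrow> bool" where
  "maximal_irreducible_simplex S m A \<longleftrightarrow> irreducible_simplex S m A \<and>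
     (\<forall>B. irreducible_simplex S m B \<and> A \<subseteq> B \<longrightarrow> B = A)"

definition perp :: "'a set \<Rightarrow> ('a \<Rightarrow> 'a \<Rightarrow> enat) \<Rightarrow> 'a set \<Rightarrow> 'a set" where
  "perp S m A = {s \<in> S. \<forall>x\<in>A. m s x = 2}"

definition separator :: "'a set \<Rightarrow> ('a \<Rightarrow> 'a \<Rightarrow> enat) \<Rightarrow> 'a \<Rightarrow> 'a \<Rightarrow> 'a set \<Rightarrow> bool" where
  "separator S m c d B \<longleftrightarrow> c \<notin> B \<and> d \<notin> B \<and>
     \<not> (\<lambda>u v. u \<notin> B \<and> v \<notin> B \<and> cox_edge S m u v)\<^sup>*\<^sup>* c d"

end

theory Submission
  imports Defs
begin

text \<open>Suppose c and d were joined by a path of \<open>\<Gamma>(W,S)\<close> avoiding \<open>B = {a,b} \<union> A\<^sup>\<bottom>\<close>,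
  and take a shortest one \<open>c = p\<^sub>0, p\<^sub>1, \<dots>, p\<^sub>n = d\<close>; it is an induced path of \<open>\<Gamma>\<close>.
  The vertex a is adjacent to both of its ends, so in the chordal graph \<open>\<Gamma>\<close> it is adjacent
  to every vertex of it (otherwise a chordless cycle of length at least 4 would appear);
  likewise b. Thus \<open>p\<^sub>1\<close> is joined to all of \<open>A = {a,b,c}\<close>, and since
  \<open>p\<^sub>1 \<notin> A\<^sup>\<bottom>\<close> some \<open>m(p\<^sub>1,x) \<ge> 3\<close>, so \<open>A \<union> {p\<^sub>1}\<close> is an irreducible simplex,
  contradicting the maximality of A.\<close>

definition induced_path :: "('a \<Rightarrow> 'a \<Rightarrow> bool) \<Rightarrow> 'a list \<Rightarrow> bool" where
  "induced_path R ps \<longleftrightarrow> distinct ps \<and>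
     (\<forall>i < length ps. \<forall>j < length ps. R (ps ! i) (ps ! j) \<longleftrightarrow> i = Suc j \<or> j = Suc i)"

lemma induced_path_successive:
  "induced_path R ps \<Longrightarrow> Suc i < length ps \<Longrightarrow> R (ps ! i) (ps ! Suc i)"
  by (simp add: induced_path_def)

lemma induced_path_take: "induced_path R ps \<Longrightarrow> induced_path R (take n ps)"
  by (simp add: induced_path_def)

lemma induced_path_drop:
  assumes "induced_path R ps"
  shows "induced_path R (drop n ps)"
proof -
  have "R (ps ! (n + i)) (ps ! (n + j)) \<longleftrightarrow> i = Suc j \<or> j = Suc i"
    if "i < length ps - n" "j < length ps - n" for i j
    using assms that by (simp add: induced_path_def)
  then show ?thesis using assms by (simp add: induced_path_def)
qed

lemma induced_path_neighbour:
  assumes "induced_path R ps" "2 \<le> length ps" "y \<in> set ps"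
  shows "\<exists>z. R y z"
proof -
  obtain k where k: "k < length ps" "y = ps ! k" using assms(3) by (auto simp: in_set_conv_nth)
  show ?thesis
  proof (cases "Suc k < length ps")
    case True
    then have "R y (ps ! Suc k)" using assms(1) k by (simp add: induced_path_def)
    then show ?thesis ..
  next
    case False
    then have "k - 1 < length ps" "k = Suc (k - 1)" using k assms(2) by auto
    then have "R y (ps ! (k - 1))" using assms(1) k by (metis induced_path_def)
    then show ?thesis ..
  qed
qed

lemma rtranclp_imp_walk:
  assumes "R\<^sup>*\<^sup>* c d"
  obtains ps where "ps \<noteq> []" "hd ps = c" "last ps = d" "successively R ps"
  using assms
proof (induction arbitrary: thesis rule: converse_rtranclp_induct)
  case base
  show ?case by (rule base[of "[d]"]) simp_all
next
  case (step y z)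
  show ?case
  proof (rule step.IH)
    fix ps assume "ps \<noteq> []" "hd ps = z" "last ps = d" "successively R ps"
    then show thesis
      using step.hyps(1) by (intro step.prems[of "y # ps"]) (simp_all add: successively_Cons)
  qed
qed

lemma successively_shortcut:
  assumes "successively R xs" "i < j" "j < length xs" "R (xs ! i) (xs ! j)"
  shows "successively R (take (Suc i) xs @ drop j xs)"
proof -
  have "successively R (take (Suc i) xs)" "successively R (drop j xs)"
    using assms(1) successively_append_iff[of R "take (Suc i) xs" "drop (Suc i) xs"]
      successively_append_iff[of R "take j xs" "drop j xs"] by simp_all
  moreover have "last (take (Suc i) xs) = xs ! i" "hd (drop j xs) = xs ! j"
    using assms(2,3) by (simp_all add: take_Suc_conv_app_nth hd_drop_conv_nth)
  ultimately show ?thesis using assms(4) by (simp add: successively_append_iff)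
qed

lemma rtranclp_imp_induced_path:
  assumes "symp R" "irreflp R" "R\<^sup>*\<^sup>* c d"
  obtains ps where "ps \<noteq> []" "hd ps = c" "last ps = d" "induced_path R ps"
proof -
  define walk where "walk ps \<longleftrightarrow> ps \<noteq> [] \<and> hd ps = c \<and> last ps = d \<and> successively R ps" for ps
  obtain ps0 where "walk ps0" using rtranclp_imp_walk[OF assms(3)] walk_def by metis
  then obtain ps where walk: "walk ps" and shortest: "\<And>qs. walk qs \<Longrightarrow> length ps \<le> length qs"
    using ex_has_least_nat[of walk ps0 length] by blast
  have "distinct ps"
  proof (rule ccontr)
    assume "\<not> distinct ps"
    then obtain xs ys zs y where ps: "ps = xs @ [y] @ ys @ [y] @ zs"
      using not_distinct_decomp by blast
    have "successively R (y # zs)"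
      using walk successively_append_iff[of R "xs @ y # ys" "y # zs"] by (simp add: walk_def ps)
    then have "walk (xs @ [y] @ zs)"
      using walk unfolding walk_def ps by (auto simp: successively_append_iff hd_append)
    then show False using shortest ps by fastforce
  qed
  moreover have no_chord: "\<not> R (ps ! i) (ps ! j)" if "Suc i < j" "j < length ps" for i j
  proof
    assume "R (ps ! i) (ps ! j)"
    then have "walk (take (Suc i) ps @ drop j ps)"
      using walk that successively_shortcut[of R ps i j] by (auto simp: walk_def)
    then show False using shortest that by fastforce
  qed
  moreover have "R (ps ! i) (ps ! j) \<longleftrightarrow> i = Suc j \<or> j = Suc i"
    if "i < length ps" "j < length ps" for i j
  proof
    assume "R (ps ! i) (ps ! j)"
    then show "i = Suc j \<or> j = Suc i"
      using no_chord[of i j] no_chord[of j i] that assms(1,2)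
      by (metis irreflp_def linorder_neqE_nat not_less_eq symp_def)
  next
    have "R (ps ! k) (ps ! Suc k)" if "Suc k < length ps" for k
      using walk that by (simp add: walk_def successively_nth)
    then show "i = Suc j \<or> j = Suc i \<Longrightarrow> R (ps ! i) (ps ! j)"
      using that assms(1) by (auto dest: sympD)
  qed
  ultimately have "induced_path R ps" by (simp add: induced_path_def)
  then show ?thesis using that walk unfolding walk_def by blast
qed

lemma induced_path_avoiding:
  assumes "symp R" "irreflp R" "(\<lambda>u v. u \<notin> B \<and> v \<notin> B \<and> R u v)\<^sup>*\<^sup>* c d" "c \<noteq> d"
  obtains ps where "2 \<le> length ps" "hd ps = c" "last ps = d" "induced_path R ps"
    "\<forall>y \<in> set ps. y \<notin> B"
proof -
  let ?R_B = "\<lambda>u v. u \<notin> B \<and> v \<notin> B \<and> R u v"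
  have "symp ?R_B" "irreflp ?R_B" using assms(1,2) by (auto simp: symp_def irreflp_def)
  then obtain ps where ps: "ps \<noteq> []" "hd ps = c" "last ps = d" "induced_path ?R_B ps"
    using assms(3) by (rule rtranclp_imp_induced_path)
  have len: "2 \<le> length ps" using ps(1-3) assms(4) by (cases ps; cases "tl ps") auto
  moreover have outside: "\<forall>y \<in> set ps. y \<notin> B"
    using induced_path_neighbour[OF ps(4) len] by blast
  moreover have "induced_path R ps" using ps(4) outside by (simp add: induced_path_def)
  ultimately show ?thesis using that ps(2,3) by blast
qed

lemma symp_cox_edge: "coxeter_matrix S m \<Longrightarrow> symp (cox_edge S m)"
  by (auto simp: symp_def cox_edge_def coxeter_matrix_def)

lemma irreflp_cox_edge: "irreflp (cox_edge S m)"
  by (simp add: irreflp_def cox_edge_def)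

lemma Cons_induced_path_cycle:
  assumes "symp E" "induced_path E ps" "ps \<noteq> []" "E x (hd ps)" "E x (last ps)"
    and "i \<le> length ps"
  shows "E ((x # ps) ! i) ((x # ps) ! (Suc i mod Suc (length ps)))"
proof -
  consider "i = 0" | k where "i = Suc k" "Suc k < length ps" | "i = length ps"
    using assms(6) by (cases i) (auto simp: le_less)
  then show ?thesis
  proof cases
    case 1
    then show ?thesis using assms(3,4) by (simp add: hd_conv_nth)
  next
    case 2
    then show ?thesis using induced_path_successive[OF assms(2)] by simp
  next
    case 3
    then show ?thesis using assms(3,5) sympD[OF assms(1)] by (simp add: last_conv_nth)
  qed
qed

lemma Cons_induced_path_chordless:
  assumes "symp E" "irreflp E" "induced_path E ps"
    and x: "\<forall>k < length ps. E x (ps ! k) \<longrightarrow> k = 0 \<or> k = length ps - 1"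
    and "p \<le> length ps" "q \<le> length ps" "E ((x # ps) ! p) ((x # ps) ! q)"
  shows "q = Suc p \<or> p = Suc q \<or> (p = 0 \<and> q = length ps) \<or> (q = 0 \<and> p = length ps)"
proof (cases p; cases q)
  fix p' q' assume "p = Suc p'" "q = Suc q'"
  then show ?thesis using assms(3,5-7) by (auto simp: induced_path_def)
next
  fix q' assume "p = 0" "q = Suc q'"
  then show ?thesis using assms(6,7) x[rule_format, of q'] by auto
next
  fix p' assume "p = Suc p'" "q = 0"
  then show ?thesis using assms(5,7) x[rule_format, of p'] sympD[OF assms(1)] by auto
qed (use assms(2,7) in \<open>simp add: irreflp_def\<close>)

lemma chordal_adjacent_interior:
  assumes cm: "coxeter_matrix S m" and ch: "chordal S m"
    and path: "induced_path (cox_edge S m) ps" and len: "3 \<le> length ps"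
    and x: "x \<notin> set ps" "cox_edge S m x (hd ps)" "cox_edge S m x (last ps)"
  shows "\<exists>k. 0 < k \<and> k < length ps - 1 \<and> cox_edge S m x (ps ! k)"
proof (rule ccontr)
  let ?E = "cox_edge S m" and ?vs = "x # ps"
  assume "\<nexists>k. 0 < k \<and> k < length ps - 1 \<and> ?E x (ps ! k)"
  then have x_nbrs: "\<forall>k < length ps. ?E x (ps ! k) \<longrightarrow> k = 0 \<or> k = length ps - 1"
    by fastforce
  have "ps \<noteq> []" using len by auto
  then have "\<forall>i < length ?vs. ?E (?vs ! i) (?vs ! ((i + 1) mod length ?vs))"
    using Cons_induced_path_cycle[OF symp_cox_edge[OF cm] path _ x(2,3)] by auto
  moreover have "set ?vs \<subseteq> S"
    using x(2) induced_path_neighbour[OF path] len by (fastforce simp: cox_edge_def)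
  moreover have "distinct ?vs" "4 \<le> length ?vs"
    using x path len by (auto simp: induced_path_def)
  ultimately obtain i j where "i < length ?vs" "j < length ?vs" "i \<noteq> j"
    "j \<noteq> (i + 1) mod length ?vs" "i \<noteq> (j + 1) mod length ?vs" "?E (?vs ! i) (?vs ! j)"
    using ch unfolding chordal_def by blast
  then show False
    using Cons_induced_path_chordless[OF symp_cox_edge[OF cm] irreflp_cox_edge path x_nbrs, of i j]
    by auto
qed

lemma chordal_adjacent_path:
  assumes cm: "coxeter_matrix S m" and ch: "chordal S m"
    and "induced_path (cox_edge S m) ps"
    and "x \<notin> set ps" "cox_edge S m x (hd ps)" "cox_edge S m x (last ps)"
  shows "\<forall>y \<in> set ps. cox_edge S m x y"
  using assms(3-)
proof (induction "length ps" arbitrary: ps rule: less_induct)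
  case less
  show ?case
  proof (cases "length ps \<le> 2")
    case True
    have "y = hd ps \<or> y = last ps" if y: "y \<in> set ps" for y
    proof -
      obtain k where k: "k < length ps" "y = ps ! k" using y by (auto simp: in_set_conv_nth)
      then have "ps \<noteq> []" "k = 0 \<or> k = length ps - 1" using True by auto
      then show ?thesis using k by (auto simp: hd_conv_nth last_conv_nth)
    qed
    then show ?thesis using less.prems by blast
  next
    case False
    then obtain k where k: "0 < k" "k < length ps - 1" "cox_edge S m x (ps ! k)"
      using chordal_adjacent_interior[OF cm ch less.prems(1) _ less.prems(2-4)] by auto
    have "\<forall>y \<in> set (take (Suc k) ps). cox_edge S m x y"
    proof (rule less.hyps)
      show "length (take (Suc k) ps) < length ps" using k by simp
      show "x \<notin> set (take (Suc k) ps)" using less.prems(2) by (auto dest: in_set_takeD)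
      show "cox_edge S m x (last (take (Suc k) ps))" using k by (simp add: take_Suc_conv_app_nth)
    qed (use less.prems(1,3) in \<open>simp_all add: induced_path_take\<close>)
    moreover have "\<forall>y \<in> set (drop k ps). cox_edge S m x y"
    proof (rule less.hyps)
      show "length (drop k ps) < length ps" using k by simp
      show "x \<notin> set (drop k ps)" using less.prems(2) by (auto dest: in_set_dropD)
      show "cox_edge S m x (hd (drop k ps))" using k by (simp add: hd_drop_conv_nth)
    qed (use k less.prems(1,4) in \<open>simp_all add: induced_path_drop\<close>)
    moreover have "set ps \<subseteq> set (take (Suc k) ps) \<union> set (drop k ps)"
      using set_take_subset_set_take[of k "Suc k" ps] set_append[of "take k ps" "drop k ps"]
      by auto
    ultimately show ?thesis by blast
  qed
qed

lemma simplex_cox_edge: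
  "simplex S m A \<Longrightarrow> s \<in> A \<Longrightarrow> t \<in> A \<Longrightarrow> s \<noteq> t \<Longrightarrow> cox_edge S m s t"
  by (auto simp: simplex_def cox_edge_def)

lemma irreducible_simplex_insert:
  assumes cm: "coxeter_matrix S m" and A: "irreducible_simplex S m A"
    and v: "v \<in> S" "\<forall>y \<in> A. m y v < \<infinity>" and x: "x \<in> A" "3 \<le> m x v"
  shows "irreducible_simplex S m (insert v A)"
proof -
  let ?Q = "\<lambda>T u w. u \<in> T \<and> w \<in> T \<and> u \<noteq> w \<and> 3 \<le> m u w"
  have AS: "A \<subseteq> S" and A_fin: "\<forall>s \<in> A. \<forall>t \<in> A. m s t < \<infinity>"
    and A_conn: "\<forall>y \<in> A. \<forall>z \<in> A. (?Q A)\<^sup>*\<^sup>* y z"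
    using A by (auto simp: irreducible_simplex_def simplex_def)
  have m_sym: "m s t = m t s" if "s \<in> S" "t \<in> S" for s t
    using cm that by (simp add: coxeter_matrix_def)
  have "m v v = 1" using cm v(1) by (simp add: coxeter_matrix_def)
  then have "simplex S m (insert v A)"
    using AS A_fin v m_sym by (auto simp: simplex_def one_enat_def)
  moreover have "x \<noteq> v" using x \<open>m v v = 1\<close> by (auto simp: one_enat_def numeral_eq_enat)
  then have "?Q (insert v A) x v" "?Q (insert v A) v x"
    using x v AS m_sym[of x v] by auto
  moreover have "(?Q (insert v A))\<^sup>*\<^sup>* y z" if "y \<in> A" "z \<in> A" for y z
    using A_conn that mono_rtranclp[of "?Q A" "?Q (insert v A)"] by blast
  ultimately show ?thesis
    using x(1) unfolding irreducible_simplex_def by (blast intro: rtranclp_trans)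
qed

lemma maximal_irreducible_simplex_common_neighbour:
  assumes cm: "coxeter_matrix S m" and A: "maximal_irreducible_simplex S m A"
    and v: "v \<notin> A" "\<forall>x \<in> A. cox_edge S m x v"
  shows "v \<in> perp S m A"
proof (rule ccontr)
  have irr: "irreducible_simplex S m A" and AS: "A \<subseteq> S"
    using A by (auto simp: maximal_irreducible_simplex_def irreducible_simplex_def simplex_def)
  then have "v \<in> S" using v(2) by (auto simp: irreducible_simplex_def cox_edge_def)
  assume "v \<notin> perp S m A"
  then obtain x where x: "x \<in> A" "m x v \<noteq> 2"
    using \<open>v \<in> S\<close> AS cm by (auto simp: perp_def coxeter_matrix_def)
  moreover have "2 \<le> m x v" using cm x v AS \<open>v \<in> S\<close> by (auto simp: coxeter_matrix_def)
  ultimately have "3 \<le> m x v" by (cases "m x v") (auto simp: numeral_eq_enat)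
  then have "irreducible_simplex S m (insert v A)"
    using irreducible_simplex_insert[OF cm irr \<open>v \<in> S\<close>] x(1) v(2) by (auto simp: cox_edge_def)
  then show False
    using A v(1) by (auto simp: maximal_irreducible_simplex_def)
qed

theorem lemma4p1:
  fixes S :: "'a set" and m :: "'a \<Rightarrow> 'a \<Rightarrow> enat" and a b c d :: 'a
  assumes "coxeter_matrix S m"
    and "chordal S m"
    and "distinct [a, b, c]"
    and "maximal_irreducible_simplex S m {a, b, c}"
    and "d \<in> S - ({a, b, c} \<union> perp S m {a, b, c})"
    and "simplex S m {a, b, d}"
  shows "separator S m c d ({a, b} \<union> perp S m {a, b, c})"
proof -
  note cm = assms(1) and ch = assms(2) and A = assms(4)
  define B where "B = {a, b} \<union> perp S m {a, b, c}"
  let ?E = "cox_edge S m" and ?R = "\<lambda>u v. u \<notin> B \<and> v \<notin> B \<and> cox_edge S m u v"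
  have abc: "simplex S m {a, b, c}"
    using A by (simp add: maximal_irreducible_simplex_def irreducible_simplex_def)
  then have "?E a c" "?E b c" "c \<in> S"
    using simplex_cox_edge[OF abc] assms(3) by (auto simp: simplex_def)
  have "?E a d" "?E b d"
    using simplex_cox_edge[OF assms(6)] assms(5) by auto
  have "c \<notin> B" using assms(3) cm \<open>c \<in> S\<close> by (auto simp: B_def perp_def coxeter_matrix_def)
  have "d \<notin> B" "c \<noteq> d" using assms(5) by (auto simp: B_def)
  have "\<not> ?R\<^sup>*\<^sup>* c d"
  proof
    assume "?R\<^sup>*\<^sup>* c d"
    then obtain ps where ps: "2 \<le> length ps" "hd ps = c" "last ps = d"
      and path: "induced_path ?E ps" and outside: "\<forall>y \<in> set ps. y \<notin> B"
      by (rule induced_path_avoiding[OF symp_cox_edge[OF cm] irreflp_cox_edge _ \<open>c \<noteq> d\<close>])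
    define v where "v = ps ! 1"
    have "v \<in> set ps" using \<open>2 \<le> length ps\<close> by (simp add: v_def)
    have "c = ps ! 0" using ps(1,2) hd_conv_nth[of ps] by fastforce
    then have "?E c v"
      using induced_path_successive[OF path, of 0] \<open>2 \<le> length ps\<close> by (simp add: v_def)
    then have "v \<noteq> c" by (auto simp: cox_edge_def)
    have "?E a v" "?E b v"
      using chordal_adjacent_path[OF cm ch path] ps(2,3) outside \<open>v \<in> set ps\<close>
        \<open>?E a c\<close> \<open>?E a d\<close> \<open>?E b c\<close> \<open>?E b d\<close> by (auto simp: B_def)
    then have "v \<in> perp S m {a, b, c}"
      using outside \<open>v \<in> set ps\<close> \<open>v \<noteq> c\<close> \<open>?E c v\<close>
      by (intro maximal_irreducible_simplex_common_neighbour[OF cm A]) (auto simp: B_def)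
    then show False using outside \<open>v \<in> set ps\<close> by (simp add: B_def)
  qed
  then show ?thesis using \<open>c \<notin> B\<close> \<open>d \<notin> B\<close> by (simp add: separator_def B_def)
qed

end
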